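(* Let $n \geq 0$ be an integer and consider Nim on the hypercube $Q_{2n+1}$ in which every edge has weight $1$, with the playing piece $\Delta$ starting at the vertex $\emptyset$. Then the first player $P_1$ has a strategy which guarantees that, throughout the game, $\Delta$ only ever lies on vertices at levels $\emptyset$, $1$ and $2$, i.e. on vertices whose labelling subset $X \subseteq \{1,\dots,2n+1\}$ has $|X| \leq 2$.
   Context: Nim on a graph: two players agree on a finite simple undirected graph $G$ whose edges carry positive integer weights, and a starting vertex on which a playing piece $\Delta$ is placed. Players $P_1$ (who moves first) and $P_2$ alternate. On a turn, the player chooses an edge of positive weight incident with the vertex currently holding $\Delta$, lowers that edge's weight by a positive integer amount, and moves $\Delta$ to the other endpoint of that edge. Edges of weight $0$ are no longer playable. A player who cannot move (no playable edge is incident with $\Delta$) loses. With unit weight (every edge has weight $1$), each edge can be traversed at most once in total. The hypercube $Q_m$ has as vertices the subsets $X \subseteq \{1,\dots,m\}$ (equivalently binary $m$-tuples), two vertices being adjacent iff they differ in exactly one element; the level of vertex $X$ is $|X|$, and $\emptyset$ is the empty set. *)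

theory Defs
  imports Main
begin

definition hc_adj :: "nat \<Rightarrow> nat set \<Rightarrow> nat set \<Rightarrow> bool" where
  "hc_adj m X Y \<longleftrightarrow> X \<subseteq> {1..m} \<and> Y \<subseteq> {1..m} \<and> card ((X - Y) \<union> (Y - X)) = 1"

definition edges_of :: "nat set list \<Rightarrow> nat set set list" where
  "edges_of vs = map (\<lambda>(a, b). {a, b}) (zip vs (tl vs))"

text \<open>A history of unit-weight Nim on Q_m started at the empty set: the list of
positions of the piece; each move goes along a hypercube edge and, since all
weights are 1, every edge is used at most once.\<close>
definition valid_history :: "nat \<Rightarrow> nat set list \<Rightarrow> bool" where
  "valid_history m vs \<longleftrightarrow> vs \<noteq> [] \<and> hd vs = {} \<and>
     (\<forall>i. i + 1 < length vs \<longrightarrow> hc_adj m (vs ! i) (vs ! (i + 1))) \<and>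
     distinct (edges_of vs)"

text \<open>A strategy for P1 maps a history (at which P1 is to move) to the next
vertex. Moves number 0, 2, 4, ... (0-based) are made by P1, i.e. P1 is to move
when the history has odd length.\<close>
definition consistent_P1 :: "nat \<Rightarrow> (nat set list \<Rightarrow> nat set) \<Rightarrow> nat set list \<Rightarrow> bool" where
  "consistent_P1 m \<sigma> vs \<longleftrightarrow> valid_history m vs \<and>
     (\<forall>i. i + 1 < length vs \<longrightarrow> even i \<longrightarrow> vs ! (i + 1) = \<sigma> (take (i + 1) vs))"

definition legal_P1_strategy :: "nat \<Rightarrow> (nat set list \<Rightarrow> nat set) \<Rightarrow> bool" where
  "legal_P1_strategy m \<sigma> \<longleftrightarrow>
     (\<forall>vs. consistent_P1 m \<sigma> vs \<longrightarrow> odd (length vs) \<longrightarrow>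
        (\<exists>w. valid_history m (vs @ [w])) \<longrightarrow> valid_history m (vs @ [\<sigma> vs]))"

end

theory Submission
  imports Defs
begin

text \<open>P1 always moves to a vertex of level at most 1 when one is available. As long as P1 is
never forced upwards, the piece is then on level 1 after P1's moves and on level 0 or 2 after
P2's moves. P1 is indeed never forced upwards. At \<emptyset> the walk played so far is closed, so it
has used an even number of the 2n+1 edges at \<emptyset>. A level-2 vertex {a,b}, entered from {a},
is visited for the first time: an earlier visit would have used both edges to {a} and {b},
leaving none for the current arrival. Hence the edge from {a,b} down to {b} is still unused.\<close>

lemma edges_of_Nil [simp]: "edges_of [] = []"
  by (simp add: edges_of_def)

lemma edges_of_single [simp]: "edges_of [x] = []"
  by (simp add: edges_of_def)

lemma edges_of_Cons2 [simp]: "edges_of (x # y # ys) = {x, y} # edges_of (y # ys)"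
  by (simp add: edges_of_def)

lemma length_edges_of [simp]: "length (edges_of vs) = length vs - 1"
  by (simp add: edges_of_def)

lemma nth_edges_of: "Suc i < length vs \<Longrightarrow> edges_of vs ! i = {vs ! i, vs ! Suc i}"
  by (simp add: edges_of_def nth_tl)

lemma edges_of_snoc: "vs \<noteq> [] \<Longrightarrow> edges_of (vs @ [w]) = edges_of vs @ [{last vs, w}]"
  by (induction vs rule: induct_list012) auto

lemma length_filter_edges_of_incident:
  "successively (\<noteq>) vs \<Longrightarrow> vs \<noteq> [] \<Longrightarrow>
     length (filter ((\<in>) v) (edges_of vs)) + of_bool (hd vs = v) + of_bool (last vs = v)
       = 2 * count_list vs v"
proof (induction vs rule: induct_list012)
  case (3 x y zs)
  then have "x \<noteq> y" and IH: "length (filter ((\<in>) v) (edges_of (y # zs))) + of_bool (y = v)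
      + of_bool (last (y # zs) = v) = 2 * count_list (y # zs) v"
    by auto
  then show ?case
    by (cases "x = v"; cases "y = v") (simp_all add: eq_commute)
qed simp_all

lemma hc_adjE:
  assumes "hc_adj m X Y"
  obtains y where "y \<notin> X" "Y = insert y X" | x where "x \<notin> Y" "X = insert x Y"
proof -
  from assms obtain z where "(X - Y) \<union> (Y - X) = {z}"
    unfolding hc_adj_def by (elim conjE card_1_singletonE)
  then have z: "(t \<in> X \<longleftrightarrow> t \<notin> Y) \<longleftrightarrow> t = z" for t
    by (auto simp: set_eq_iff)
  show thesis
  proof (cases "z \<in> X")
    case True
    then have "z \<notin> Y"
      using z[of z] by blast
    moreover have "X = insert z Y"
      using z \<open>z \<in> X\<close> \<open>z \<notin> Y\<close> by (intro set_eqI) (metis insert_iff)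
    ultimately show thesis by (rule that(2))
  next
    case False
    then have "Y = insert z X"
      using z by (intro set_eqI) (metis insert_iff)
    with False show thesis by (rule that(1))
  qed
qed

lemma hc_adj_sym: "hc_adj m X Y \<Longrightarrow> hc_adj m Y X"
  unfolding hc_adj_def by (simp add: Un_commute)

lemma hc_adj_finite: "hc_adj m X Y \<Longrightarrow> finite X \<and> finite Y"
  unfolding hc_adj_def by (meson finite_atLeastAtMost finite_subset)

lemma hc_adj_card:
  assumes "hc_adj m X Y"
  shows "card Y = Suc (card X) \<or> card X = Suc (card Y)"
  using assms by (rule hc_adjE) (use hc_adj_finite[OF assms] in auto)

lemma hc_adj_neq: "hc_adj m X Y \<Longrightarrow> X \<noteq> Y"
  using hc_adj_card by fastforce

lemma hc_adj_card_less_subset: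
  assumes "hc_adj m X Y" "card X < card Y"
  shows "X \<subseteq> Y"
  using assms(1) by (rule hc_adjE) (use assms hc_adj_finite[OF assms(1)] in auto)

lemma hc_adj_emptyD:
  assumes "hc_adj m {} Y"
  shows "\<exists>c\<in>{1..m}. Y = {c}"
  using assms by (rule hc_adjE) (use assms in \<open>auto simp: hc_adj_def\<close>)

lemma hc_adj_empty_singleton: "c \<in> {1..m} \<Longrightarrow> hc_adj m {} {c}"
  by (simp add: hc_adj_def)

lemma hc_adj_singleton_level_two:
  assumes "hc_adj m Y X" "card Y = 1" "card X = 2"
  shows "\<exists>y\<in>X. Y = {y}"
proof -
  obtain y where "Y = {y}"
    using assms(2) by (rule card_1_singletonE)
  moreover have "Y \<subseteq> X"
    using hc_adj_card_less_subset[OF assms(1)] assms(2,3) by simp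
  ultimately show ?thesis
    by blast
qed

lemma valid_history_iff:
  "valid_history m vs \<longleftrightarrow>
     vs \<noteq> [] \<and> hd vs = {} \<and> successively (hc_adj m) vs \<and> distinct (edges_of vs)"
  by (simp add: valid_history_def successively_conv_nth)

lemma valid_history_snoc:
  "vs \<noteq> [] \<Longrightarrow> valid_history m (vs @ [w]) \<longleftrightarrow>
     valid_history m vs \<and> hc_adj m (last vs) w \<and> {last vs, w} \<notin> set (edges_of vs)"
  by (auto simp: valid_history_iff successively_append_iff edges_of_snoc)

lemma valid_history_nonempty: "valid_history m vs \<Longrightarrow> vs \<noteq> []"
  by (simp add: valid_history_def)

lemma valid_history_hc_adj:
  "valid_history m vs \<Longrightarrow> Suc i < length vs \<Longrightarrow> hc_adj m (vs ! i) (vs ! Suc i)"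
  by (simp add: valid_history_def)

lemma valid_history_nth_0: "valid_history m vs \<Longrightarrow> vs ! 0 = {}"
  by (cases vs) (simp_all add: valid_history_def)

lemma valid_history_finite:
  assumes "valid_history m vs" "i < length vs"
  shows "finite (vs ! i)"
proof (cases i)
  case 0
  then show ?thesis using assms valid_history_nth_0 by simp
next
  case (Suc k)
  then show ?thesis using assms valid_history_hc_adj hc_adj_finite by blast
qed

lemma valid_history_edges_neq:
  assumes "valid_history m vs" "k < l" "Suc l < length vs"
  shows "{vs ! k, vs ! Suc k} \<noteq> {vs ! l, vs ! Suc l}"
proof -
  have "edges_of vs ! k \<noteq> edges_of vs ! l"
    using assms by (simp add: valid_history_iff nth_eq_iff_index_eq)
  then show ?thesis
    using nth_edges_of[of k vs] nth_edges_of[of l vs] assms(2,3) by simp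
qed

lemma valid_history_successively_neq:
  assumes "valid_history m vs"
  shows "successively (\<noteq>) vs"
proof -
  have "successively (hc_adj m) vs"
    using assms by (simp add: valid_history_iff)
  then show ?thesis
    by (rule successively_mono) (erule hc_adj_neq)
qed

lemma consistent_P1_snocD:
  assumes C: "consistent_P1 m \<sigma> (vs @ [w])" and "vs \<noteq> []"
  shows "consistent_P1 m \<sigma> vs" and "odd (length vs) \<Longrightarrow> w = \<sigma> vs"
proof -
  have move: "(vs @ [w]) ! Suc i = \<sigma> (take (Suc i) (vs @ [w]))"
    if "i < length vs" "even i" for i
    using C that unfolding consistent_P1_def by simp
  have "valid_history m vs"
    using C \<open>vs \<noteq> []\<close> valid_history_snoc unfolding consistent_P1_def by blast
  moreover have "vs ! Suc i = \<sigma> (take (Suc i) vs)" if "Suc i < length vs" "even i" for i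
    using move[of i] that by (simp add: nth_append)
  ultimately show "consistent_P1 m \<sigma> vs"
    by (simp add: consistent_P1_def)
  assume "odd (length vs)"
  then show "w = \<sigma> vs"
    using move[of "length vs - 1"] \<open>vs \<noteq> []\<close> by simp
qed

text \<open>Entry i of a history is the position after i moves, so odd entries follow P1's moves.\<close>

definition levels_alternate :: "nat set list \<Rightarrow> bool" where
  "levels_alternate vs \<longleftrightarrow>
     (\<forall>i<length vs. card (vs ! i) \<in> (if odd i then {1} else {0, 2}))"

lemma levels_alternate_Nil [simp]: "levels_alternate []"
  by (simp add: levels_alternate_def)

lemma levels_alternate_snoc:
  "levels_alternate (vs @ [w]) \<longleftrightarrow>
     levels_alternate vs \<and> card w \<in> (if odd (length vs) then {1} else {0, 2})"
  unfolding levels_alternate_def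
  by (auto simp: nth_append less_Suc_eq)

lemma levels_alternateD:
  "levels_alternate vs \<Longrightarrow> i < length vs \<Longrightarrow> card (vs ! i) \<in> (if odd i then {1} else {0, 2})"
  by (simp add: levels_alternate_def)

lemma levels_alternate_level_two_even:
  "levels_alternate vs \<Longrightarrow> i < length vs \<Longrightarrow> card (vs ! i) = 2 \<Longrightarrow> even i"
  by (auto dest: levels_alternateD split: if_splits)

lemma levels_alternate_neighbour_of_level_two:
  assumes "levels_alternate vs" "k < length vs" "odd k"
    and "hc_adj m (vs ! k) X" "card X = 2"
  shows "\<exists>y\<in>X. vs ! k = {y}"
  using hc_adj_singleton_level_two[OF assms(4) _ assms(5)] levels_alternateD[OF assms(1,2)] assms(3)
  by simp

lemma levels_alternate_card_le:
  "levels_alternate vs \<Longrightarrow> X \<in> set vs \<Longrightarrow> card X \<le> 2"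
  by (fastforce simp: in_set_conv_nth dest: levels_alternateD split: if_splits)

lemma exists_move_from_empty:
  assumes V: "valid_history m vs" and last_empty: "last vs = {}" and "odd m"
  shows "\<exists>c. valid_history m (vs @ [{c}])"
proof -
  define used where "used = filter ((\<in>) {}) (edges_of vs)"
  define star where "star = (\<lambda>c. {{}, {c}}) ` {1..m}"
  have "length used + of_bool (hd vs = {}) + of_bool (last vs = {}) = 2 * count_list vs {}"
    unfolding used_def using valid_history_successively_neq[OF V] valid_history_nonempty[OF V]
    by (rule length_filter_edges_of_incident)
  moreover have "hd vs = {}"
    using V by (simp add: valid_history_def)
  ultimately have "length used + 2 = 2 * count_list vs {}"
    using last_empty by simp
  then have "even (length used)"
    by presburger
  moreover have "distinct used"
    using V by (simp add: valid_history_iff used_def)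
  moreover have "card star = m"
    unfolding star_def by (subst card_image) (auto simp: inj_on_def doubleton_eq_iff)
  ultimately have "set used \<noteq> star"
    using \<open>odd m\<close> distinct_card by fastforce
  moreover have "set used \<subseteq> star"
  proof
    fix e assume "e \<in> set used"
    then obtain i where "i < length (edges_of vs)" "e = edges_of vs ! i" "{} \<in> e"
      unfolding used_def by (auto simp: in_set_conv_nth)
    then have i: "Suc i < length vs" "e = {vs ! i, vs ! Suc i}" "{} \<in> e"
      by (auto simp: nth_edges_of)
    have adj: "hc_adj m (vs ! i) (vs ! Suc i)"
      using V i(1) by (rule valid_history_hc_adj)
    consider "vs ! i = {}" | "vs ! Suc i = {}"
      using i(2,3) by blast
    then show "e \<in> star"
    proof cases
      case 1
      then show ?thesis using hc_adj_emptyD[of m "vs ! Suc i"] adj i(2) by (auto simp: star_def)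
    next
      case 2
      then show ?thesis using hc_adj_emptyD[of m "vs ! i"] hc_adj_sym[OF adj] i(2)
        by (auto simp: star_def)
    qed
  qed
  ultimately obtain c where c: "c \<in> {1..m}" "{{}, {c}} \<notin> set used"
    unfolding star_def by blast
  have "valid_history m (vs @ [{c}])"
    unfolding valid_history_snoc[OF valid_history_nonempty[OF V]] last_empty
    using V hc_adj_empty_singleton[OF c(1)] c(2) by (simp add: used_def)
  then show ?thesis ..
qed

text \<open>An earlier visit to a level-2 vertex X at q uses the edges from both of its level-one
neighbours in the history, and the visit at j uses a third edge from a level-one neighbour. All
three edges are distinct, but X has only two neighbours of level one.\<close>

lemma level_two_visited_once:
  assumes V: "valid_history m vs" and L: "levels_alternate vs"
    and "q < j" "j < length vs" and level_two: "card (vs ! j) = 2"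
  shows "vs ! q \<noteq> vs ! j"
proof
  let ?X = "vs ! j"
  assume revisit: "vs ! q = ?X"
  have "even q" "even j"
    using levels_alternate_level_two_even[OF L] revisit level_two \<open>q < j\<close> \<open>j < length vs\<close>
    by auto
  have "q \<noteq> 0"
  proof
    assume "q = 0"
    then have "?X = {}"
      using valid_history_nth_0[OF V] revisit by simp
    with level_two show False
      by simp
  qed
  then have idx: "Suc (q - 1) = q" "Suc (Suc q) \<le> j" "Suc (j - 1) = j"
    using \<open>q < j\<close> \<open>even q\<close> \<open>even j\<close> by presburger+
  have "hc_adj m (vs ! (q - 1)) ?X" "hc_adj m (vs ! (j - 1)) ?X"
    using valid_history_hc_adj[OF V, of "q - 1"] valid_history_hc_adj[OF V, of "j - 1"]
      idx revisit \<open>j < length vs\<close> by auto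
  moreover have "hc_adj m (vs ! Suc q) ?X"
    using hc_adj_sym[OF valid_history_hc_adj[OF V, of q]] idx revisit \<open>j < length vs\<close> by simp
  moreover have "odd (q - 1)" "odd (Suc q)" "odd (j - 1)"
    using \<open>even q\<close> \<open>even j\<close> idx by auto
  moreover have "q - 1 < length vs" "Suc q < length vs" "j - 1 < length vs"
    using idx \<open>j < length vs\<close> by auto
  ultimately obtain y1 y2 y3 where y: "y1 \<in> ?X" "y2 \<in> ?X" "y3 \<in> ?X"
    and nbs: "vs ! (q - 1) = {y1}" "vs ! Suc q = {y2}" "vs ! (j - 1) = {y3}"
    using levels_alternate_neighbour_of_level_two[OF L _ _ _ level_two] by meson
  have "{{y1}, ?X} \<noteq> {?X, {y2}}" "{{y1}, ?X} \<noteq> {{y3}, ?X}" "{?X, {y2}} \<noteq> {{y3}, ?X}"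
    using valid_history_edges_neq[OF V, of "q - 1" q] valid_history_edges_neq[OF V, of "q - 1" "j - 1"]
      valid_history_edges_neq[OF V, of q "j - 1"] idx nbs revisit \<open>j < length vs\<close>
    by simp_all
  then have "y1 \<noteq> y2" "y1 \<noteq> y3" "y2 \<noteq> y3"
    by (metis insert_commute)+
  then have "card {y1, y2, y3} = 3"
    by simp
  moreover have "card {y1, y2, y3} \<le> card ?X"
    using y valid_history_finite[OF V \<open>j < length vs\<close>] by (intro card_mono) auto
  ultimately show False
    using level_two by simp
qed

lemma level_two_entered_from_singleton:
  assumes V: "valid_history m vs" and L: "levels_alternate vs"
    and "j < length vs" and level_two: "card (vs ! j) = 2"
  obtains a b where "0 < j" "a \<noteq> b" "vs ! j = {a, b}" "vs ! (j - 1) = {a}"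
proof -
  have "even j"
    using levels_alternate_level_two_even[OF L \<open>j < length vs\<close> level_two] .
  have "j \<noteq> 0"
  proof
    assume "j = 0"
    then have "vs ! j = {}"
      using valid_history_nth_0[OF V] by simp
    with level_two show False
      by simp
  qed
  then have idx: "Suc (j - 1) = j" "odd (j - 1)"
    using \<open>even j\<close> by auto
  have "hc_adj m (vs ! (j - 1)) (vs ! j)"
    using valid_history_hc_adj[OF V, of "j - 1"] idx \<open>j < length vs\<close> by simp
  moreover have "j - 1 < length vs"
    using \<open>j < length vs\<close> by simp
  ultimately obtain a where a: "a \<in> vs ! j" "vs ! (j - 1) = {a}"
    using levels_alternate_neighbour_of_level_two[OF L _ idx(2) _ level_two] by blast
  have "finite (vs ! j)"
    using valid_history_finite[OF V \<open>j < length vs\<close>] .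
  then have "card (vs ! j - {a}) = 1"
    using a(1) level_two by simp
  then obtain b where "vs ! j - {a} = {b}"
    by (rule card_1_singletonE)
  then have "vs ! j = {a, b}" "a \<noteq> b"
    using a(1) by auto
  with a(2) \<open>j \<noteq> 0\<close> show thesis
    by (intro that) simp_all
qed

lemma exists_move_from_level_two:
  assumes V: "valid_history m vs" and L: "levels_alternate vs"
    and level_two: "card (last vs) = 2"
  shows "\<exists>w. card w = 1 \<and> valid_history m (vs @ [w])"
proof -
  define j where "j = length vs - 1"
  have ne: "vs \<noteq> []"
    using V by (rule valid_history_nonempty)
  have j: "j < length vs" "last vs = vs ! j"
    using ne by (auto simp: j_def last_conv_nth)
  obtain a b where ab: "0 < j" "a \<noteq> b" "last vs = {a, b}" "vs ! (j - 1) = {a}"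
    using level_two_entered_from_singleton[OF V L j(1)] level_two j(2) by metis
  have "hc_adj m {a} (last vs)"
    using valid_history_hc_adj[OF V, of "j - 1"] ab j by simp
  then have down: "hc_adj m (last vs) {b}"
    using ab(2,3) by (auto simp: hc_adj_def)
  have unused: "{last vs, {b}} \<notin> set (edges_of vs)"
  proof
    assume "{last vs, {b}} \<in> set (edges_of vs)"
    then obtain i where i: "i < j" "edges_of vs ! i = {last vs, {b}}"
      by (auto simp: in_set_conv_nth j_def)
    then have "{vs ! i, vs ! Suc i} = {last vs, {b}}"
      using nth_edges_of[of i vs] j(1) by simp
    moreover have "last vs \<noteq> {b}"
      using level_two by auto
    ultimately consider "vs ! i = last vs" | "vs ! i = {b}" "vs ! Suc i = last vs"
      unfolding doubleton_eq_iff by blast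
    then show False
    proof cases
      case 1
      then show False
        using level_two_visited_once[OF V L i(1) j(1)] j(2) level_two by simp
    next
      case 2
      show False
      proof (cases "Suc i = j")
        case True
        then show False
          using 2(1) ab(2,4) by auto
      next
        case False
        then show False
          using level_two_visited_once[OF V L _ j(1), of "Suc i"] 2(2) i(1) j(2) level_two
          by simp
      qed
    qed
  qed
  have "valid_history m (vs @ [{b}])"
    using valid_history_snoc[OF ne] V down unused by simp
  then show ?thesis
    by (intro exI[of _ "{b}"]) simp
qed

lemma exists_low_move:
  assumes "odd m" and V: "valid_history m vs" and L: "levels_alternate vs"
    and "odd (length vs)"
  shows "\<exists>w. card w \<le> 1 \<and> valid_history m (vs @ [w])"
proof -
  have ne: "vs \<noteq> []"
    using V by (rule valid_history_nonempty)
  then have last: "last vs = vs ! (length vs - 1)" "length vs - 1 < length vs"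
    by (simp_all add: last_conv_nth)
  have "card (last vs) = 0 \<or> card (last vs) = 2"
    using levels_alternateD[OF L last(2)] last(1) \<open>odd (length vs)\<close> ne by simp
  then show ?thesis
  proof
    assume "card (last vs) = 0"
    then have "last vs = {}"
      using valid_history_finite[OF V last(2)] last(1) by simp
    then obtain c where "valid_history m (vs @ [{c}])"
      using exists_move_from_empty[OF V _ \<open>odd m\<close>] by blast
    then show ?thesis
      by (intro exI[of _ "{c}"]) simp
  next
    assume "card (last vs) = 2"
    then obtain w where "card w = 1" "valid_history m (vs @ [w])"
      using exists_move_from_level_two[OF V L] by blast
    then show ?thesis
      by (intro exI[of _ w]) simp
  qed
qed

text \<open>For odd m the fallback branch is never taken in a play (by \<open>exists_low_move\<close>);
it only makes the strategy legal in general.\<close>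

definition low_strategy :: "nat \<Rightarrow> nat set list \<Rightarrow> nat set" where
  "low_strategy m vs =
     (if \<exists>w. card w \<le> 1 \<and> valid_history m (vs @ [w])
      then SOME w. card w \<le> 1 \<and> valid_history m (vs @ [w])
      else SOME w. valid_history m (vs @ [w]))"

lemma low_strategy_legal:
  "\<exists>w. valid_history m (vs @ [w]) \<Longrightarrow> valid_history m (vs @ [low_strategy m vs])"
  unfolding low_strategy_def by (smt (verit, best) someI_ex)

lemma low_strategy_low:
  "\<exists>w. card w \<le> 1 \<and> valid_history m (vs @ [w]) \<Longrightarrow> card (low_strategy m vs) \<le> 1"
  unfolding low_strategy_def by (smt (verit, best) someI_ex)

lemma levels_alternate_low_strategy:
  assumes "odd m" and "consistent_P1 m (low_strategy m) vs"
  shows "levels_alternate vs"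
  using assms(2)
proof (induction vs rule: rev_induct)
  case Nil
  show ?case by simp
next
  case (snoc w vs)
  show ?case
  proof (cases "vs = []")
    case True
    then have "w = {}"
      using snoc.prems by (simp add: consistent_P1_def valid_history_def)
    with True show ?thesis
      by (simp add: levels_alternate_def)
  next
    case False
    have C: "consistent_P1 m (low_strategy m) vs"
      using snoc.prems False by (rule consistent_P1_snocD)
    have L: "levels_alternate vs"
      using C by (rule snoc.IH)
    have V: "valid_history m vs"
      using C by (simp add: consistent_P1_def)
    have adj: "hc_adj m (last vs) w"
      using snoc.prems valid_history_snoc[OF False] by (simp add: consistent_P1_def)
    have last_level: "card (last vs) \<in> (if odd (length vs - 1) then {1} else {0, 2})"
      using levels_alternateD[OF L, of "length vs - 1"] False by (simp add: last_conv_nth)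
    have "card w \<in> (if odd (length vs) then {1} else {0, 2})"
    proof (cases "odd (length vs)")
      case True
      then have "w = low_strategy m vs"
        using consistent_P1_snocD(2)[OF snoc.prems False] by simp
      then have "card w \<le> 1"
        using low_strategy_low exists_low_move[OF \<open>odd m\<close> V L True] by simp
      then show ?thesis
        using hc_adj_card[OF adj] last_level True False by (auto simp: odd_pos)
    next
      case False
      then show ?thesis
        using hc_adj_card[OF adj] last_level \<open>vs \<noteq> []\<close> by auto
    qed
    with L show ?thesis
      by (simp add: levels_alternate_snoc)
  qed
qed

theorem mainTheorem1:
  fixes n :: nat
  shows "\<exists>\<sigma>. legal_P1_strategy (2 * n + 1) \<sigma> \<and>
           (\<forall>vs. consistent_P1 (2 * n + 1) \<sigma> vs \<longrightarrow> (\<forall>X \<in> set vs. card X \<le> 2))"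
proof (intro exI conjI allI impI ballI)
  show "legal_P1_strategy (2 * n + 1) (low_strategy (2 * n + 1))"
    unfolding legal_P1_strategy_def using low_strategy_legal by blast
next
  fix vs X
  assume "consistent_P1 (2 * n + 1) (low_strategy (2 * n + 1)) vs" and "X \<in> set vs"
  then show "card X \<le> 2"
    by (intro levels_alternate_card_le[of vs] levels_alternate_low_strategy[of "2 * n + 1"]) simp_all
qed

end
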